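(* Let $X$ be a metric space, let $A\subseteq X$ be nonempty and let $Y$ be a hyperconvex metric space. Then the multivalued mapping $\Phi:\mathcal{N}(A,Y)\to\mathcal{P}(\mathcal{N}(X,Y))$, assigning to each $f$ the set of all $f'\in\mathcal{N}(X,Y)$ with $f'|_A=f$, is nonexpansive, i.e. $H(\Phi(f),\Phi(g))\le d_\infty(f,g)$ for all $f,g\in\mathcal{N}(A,Y)$.
   Context: A metric space $Y$ is hyperconvex if $\bigcap_\alpha B(x_\alpha,r_\alpha)\ne\emptyset$ for every family of points $x_\alpha\in Y$ and radii $r_\alpha>0$ with $d(x_\alpha,x_\beta)\le r_\alpha+r_\beta$ for all $\alpha,\beta$ ($B$ denotes closed balls). $\mathcal{N}(A,Y)$ is the set of bounded nonexpansive maps $A\to Y$ with the supremum metric $d_\infty$; $H$ is the Pompeiu–Hausdorff distance in $(\mathcal{N}(X,Y),d_\infty)$: $H(B,C)=\max\{\sup_{b\in B}\mathrm{dist}(b,C),\sup_{c\in C}\mathrm{dist}(c,B)\}$. *)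

theory Defs
  imports "HOL-Analysis.Analysis" "HOL-Library.Extended_Real"
begin

text \<open>Hyperconvexity of a metric space (here: a subset S of a metric type, used with S = UNIV).
  A family of closed balls is represented by the set of its (centre, radius) pairs.\<close>
definition hyperconvex :: "'b::metric_space set \<Rightarrow> bool" where
  "hyperconvex S \<longleftrightarrow>
     (\<forall>F. F \<subseteq> S \<times> {0<..} \<longrightarrow>
        (\<forall>(x,r)\<in>F. \<forall>(y,s)\<in>F. dist x y \<le> r + s) \<longrightarrow>
        S \<inter> (\<Inter>(x,r)\<in>F. cball x r) \<noteq> {})"

definition NE :: "'a::metric_space set \<Rightarrow> ('a \<Rightarrow> 'b::metric_space) set" where
  "NE A = {f. (\<forall>x\<in>A. \<forall>y\<in>A. dist (f x) (f y) \<le> dist x y) \<and> bounded (f ` A)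
              \<and> (\<forall>x. x \<notin> A \<longrightarrow> f x = undefined)}"

definition dsup :: "'a set \<Rightarrow> ('a \<Rightarrow> 'b::metric_space) \<Rightarrow> ('a \<Rightarrow> 'b) \<Rightarrow> real" where
  "dsup A f g = (SUP x\<in>A. dist (f x) (g x))"

text \<open>Pompeiu--Hausdorff distance of sets of maps X \<rightarrow> Y w.r.t. the supremum metric
  on X (extended-real valued, so it is meaningful for arbitrary sets).\<close>
definition setdist_pt :: "'a set \<Rightarrow> ('a \<Rightarrow> 'b::metric_space) \<Rightarrow> ('a \<Rightarrow> 'b) set \<Rightarrow> ereal" where
  "setdist_pt X b C = (INF c\<in>C. ereal (dsup X b c))"

definition hausdorff_sup :: "'a set \<Rightarrow> ('a \<Rightarrow> 'b::metric_space) set \<Rightarrow> ('a \<Rightarrow> 'b) set \<Rightarrow> ereal" where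
  "hausdorff_sup X B C = max (SUP b\<in>B. setdist_pt X b C) (SUP c\<in>C. setdist_pt X c B)"

definition Phi :: "'a::metric_space set \<Rightarrow> ('a \<Rightarrow> 'b::metric_space) \<Rightarrow> ('a \<Rightarrow> 'b) set" where
  "Phi A f = {f' \<in> NE (UNIV::'a set). restrict f' A = f}"

end

theory Submission
  imports Defs
begin

text \<open>Given f' \<in> \<Phi>(f), extend g to a nonexpansive map g' on X with sup-distance at most
  d = d(f,g) from f'; then g' \<in> \<Phi>(g) witnesses dist(f', \<Phi>(g)) \<le> d, and symmetry gives the
  Hausdorff bound. The extension is built one point at a time, as for the Aronszajn--Panitchpakdi
  extension theorem: a new point x of a partial nonexpansive graph G gets a value in the
  intersection of the balls B(y, d(a,x)) for (a,y) \<in> G and of B(f'(x), d). These balls pairwise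
  intersect because f' is nonexpansive and G stays within d of f', so hyperconvexity provides the
  value; Zorn's lemma yields a maximal, hence total, extension. Since hyperconvexity only
  speaks about positive radii, the case d = 0 is handled separately (there g' = f').\<close>

definition nonexpansive_graph :: "('a::metric_space \<times> 'b::metric_space) set \<Rightarrow> bool" where
  "nonexpansive_graph G \<longleftrightarrow> (\<forall>a y b z. (a,y) \<in> G \<longrightarrow> (b,z) \<in> G \<longrightarrow> dist y z \<le> dist a b)"

lemma nonexpansive_graphD:
  "nonexpansive_graph G \<Longrightarrow> (a,y) \<in> G \<Longrightarrow> (b,z) \<in> G \<Longrightarrow> dist y z \<le> dist a b"
  unfolding nonexpansive_graph_def by blast

lemma nonexpansive_graph_single_valued:
  "nonexpansive_graph G \<Longrightarrow> (a,y) \<in> G \<Longrightarrow> (a,z) \<in> G \<Longrightarrow> y = z"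
  using nonexpansive_graphD[of G a y a z] by simp

lemma hyperconvexD:
  assumes "hyperconvex S" "F \<subseteq> S \<times> {0<..}" "\<forall>(x,r)\<in>F. \<forall>(y,s)\<in>F. dist x y \<le> r + s"
  shows "\<exists>p\<in>S. \<forall>(x,r)\<in>F. dist x p \<le> r"
proof -
  have "S \<inter> (\<Inter>(x,r)\<in>F. cball x r) \<noteq> {}"
    using assms unfolding hyperconvex_def by simp
  then show ?thesis by (fastforce simp: case_prod_beta)
qed

lemma nonexpansive_graph_Union_chain:
  assumes "chain\<^sub>\<subseteq> C" "\<forall>G\<in>C. nonexpansive_graph G"
  shows "nonexpansive_graph (\<Union>C)"
  unfolding nonexpansive_graph_def
proof clarify
  fix a y b z X Y assume "(a,y) \<in> X" "X \<in> C" "(b,z) \<in> Y" "Y \<in> C"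
  then obtain W where "W \<in> C" "(a,y) \<in> W" "(b,z) \<in> W"
    using assms(1) unfolding chain_subset_def by blast
  then show "dist y z \<le> dist a b" using assms(2) nonexpansive_graphD by blast
qed

lemma hyperconvex_extend_graph_point:
  fixes f' :: "'a::metric_space \<Rightarrow> 'b::metric_space"
  assumes hc: "hyperconvex (UNIV :: 'b set)"
    and G: "nonexpansive_graph G" and near: "\<And>a y. (a,y) \<in> G \<Longrightarrow> dist y (f' a) \<le> d"
    and f': "\<And>a. dist (f' a) (f' x) \<le> dist a x"
    and "d > 0" and x: "\<And>y. (x,y) \<notin> G"
  obtains p where "\<And>a y. (a,y) \<in> G \<Longrightarrow> dist y p \<le> dist a x" and "dist (f' x) p \<le> d"
proof -
  define F where "F = (\<lambda>(a,y). (y, dist a x)) ` G \<union> {(f' x, d)}"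
  have F_cases: "(y,r) = (f' x, d) \<or> (\<exists>a. (a,y) \<in> G \<and> r = dist a x)" if "(y,r) \<in> F" for y r
    using that unfolding F_def by auto
  have "F \<subseteq> UNIV \<times> {0<..}"
    using F_cases x \<open>d > 0\<close> by fastforce
  have near_x: "dist y (f' x) \<le> dist a x + d" if "(a,y) \<in> G" for a y
    using dist_triangle[of y "f' x" "f' a"] f'[of a] near[OF that] by linarith
  have G_x: "dist y z \<le> dist a x + dist b x" if "(a,y) \<in> G" "(b,z) \<in> G" for a y b z
    using nonexpansive_graphD[OF G that] dist_triangle2[of a b x] by linarith
  have "\<forall>(y,r)\<in>F. \<forall>(z,s)\<in>F. dist y z \<le> r + s"
  proof clarify
    fix y r z s assume "(y,r) \<in> F" "(z,s) \<in> F"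
    with F_cases[of y r] F_cases[of z s] show "dist y z \<le> r + s"
      using G_x near_x \<open>d > 0\<close> by (auto simp: dist_commute add.commute)
  qed
  with hyperconvexD[OF hc \<open>F \<subseteq> _\<close>] obtain p where p: "\<forall>(y,r)\<in>F. dist y p \<le> r"
    by blast
  have "(y, dist a x) \<in> F" if "(a,y) \<in> G" for a y
    unfolding F_def using that by force
  moreover have "(f' x, d) \<in> F" unfolding F_def by simp
  ultimately show ?thesis using p that by fastforce
qed

lemma hyperconvex_total_nonexpansive_graph_near:
  fixes f' :: "'a::metric_space \<Rightarrow> 'b::metric_space" and g :: "'a \<Rightarrow> 'b"
  assumes hc: "hyperconvex (UNIV :: 'b set)"
    and g: "\<forall>x\<in>A. \<forall>y\<in>A. dist (g x) (g y) \<le> dist x y"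
    and f': "\<forall>x y. dist (f' x) (f' y) \<le> dist x y"
    and "d > 0" and near: "\<forall>a\<in>A. dist (g a) (f' a) \<le> d"
  obtains M where "nonexpansive_graph M" "\<And>a y. (a,y) \<in> M \<Longrightarrow> dist y (f' a) \<le> d"
    "\<And>a. a \<in> A \<Longrightarrow> (a, g a) \<in> M" "\<And>x. \<exists>y. (x,y) \<in> M"
proof -
  define S where "S = {G. nonexpansive_graph G \<and> (\<forall>a y. (a,y) \<in> G \<longrightarrow> dist y (f' a) \<le> d)
                          \<and> (\<forall>a\<in>A. (a, g a) \<in> G)}"
  have "(\<lambda>a. (a, g a)) ` A \<in> S"
    unfolding S_def nonexpansive_graph_def using g near by auto
  moreover have "\<Union>C \<in> S" if "C \<in> chains S" "C \<noteq> {}" for C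
  proof -
    from that have "C \<subseteq> S" "chain\<^sub>\<subseteq> C" unfolding chains_def by auto
    then have "nonexpansive_graph (\<Union>C)"
      using nonexpansive_graph_Union_chain unfolding S_def by blast
    with \<open>C \<subseteq> S\<close> \<open>C \<noteq> {}\<close> show ?thesis unfolding S_def by blast
  qed
  ultimately have "\<forall>C\<in>chains S. \<exists>U\<in>S. \<forall>X\<in>C. X \<subseteq> U"
    by (metis Sup_upper empty_iff)
  then obtain M where "M \<in> S" and max: "\<forall>X\<in>S. M \<subseteq> X \<longrightarrow> X = M"
    using Zorn_Lemma2 by blast
  then have M: "nonexpansive_graph M" and M_near: "\<And>a y. (a,y) \<in> M \<Longrightarrow> dist y (f' a) \<le> d"
    and M_g: "\<And>a. a \<in> A \<Longrightarrow> (a, g a) \<in> M"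
    unfolding S_def by auto
  have "\<exists>y. (x,y) \<in> M" for x
  proof (rule ccontr)
    assume x: "\<nexists>y. (x,y) \<in> M"
    obtain p where p: "\<And>a y. (a,y) \<in> M \<Longrightarrow> dist y p \<le> dist a x" "dist (f' x) p \<le> d"
      using hyperconvex_extend_graph_point[OF hc M, of f' d x] M_near f' x \<open>d > 0\<close> by blast
    have "insert (x,p) M \<in> S"
      using \<open>M \<in> S\<close> p M_near nonexpansive_graphD[OF M]
      unfolding S_def nonexpansive_graph_def by (auto simp: dist_commute)
    then show False using max x by blast
  qed
  with M M_near M_g show ?thesis by (rule that)
qed

lemma hyperconvex_nonexpansive_extension_near:
  fixes f' :: "'a::metric_space \<Rightarrow> 'b::metric_space" and g :: "'a \<Rightarrow> 'b"
  assumes hc: "hyperconvex (UNIV :: 'b set)"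
    and g: "\<forall>x\<in>A. \<forall>y\<in>A. dist (g x) (g y) \<le> dist x y"
    and f': "\<forall>x y. dist (f' x) (f' y) \<le> dist x y"
    and "d \<ge> 0" and near: "\<forall>a\<in>A. dist (g a) (f' a) \<le> d"
  shows "\<exists>g'. (\<forall>x y. dist (g' x) (g' y) \<le> dist x y) \<and> (\<forall>a\<in>A. g' a = g a)
           \<and> (\<forall>x. dist (g' x) (f' x) \<le> d)"
proof (cases "d = 0")
  case True
  then show ?thesis using f' near by (intro exI[of _ f']) auto
next
  case False
  with \<open>d \<ge> 0\<close> have "d > 0" by simp
  then obtain M where M: "nonexpansive_graph M" and M_near: "\<And>a y. (a,y) \<in> M \<Longrightarrow> dist y (f' a) \<le> d"
    and M_g: "\<And>a. a \<in> A \<Longrightarrow> (a, g a) \<in> M" and total: "\<And>x. \<exists>y. (x,y) \<in> M"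
    using hyperconvex_total_nonexpansive_graph_near[OF hc g f' _ near] by blast
  define g' where "g' x = (THE y. (x,y) \<in> M)" for x
  have g'M: "(x, g' x) \<in> M" for x
    using total[of x] nonexpansive_graph_single_valued[OF M]
    unfolding g'_def by (metis theI)
  show ?thesis
  proof (intro exI conjI allI ballI)
    show "dist (g' x) (g' y) \<le> dist x y" for x y
      using nonexpansive_graphD[OF M g'M g'M] .
    show "dist (g' x) (f' x) \<le> d" for x
      using M_near[OF g'M] .
    show "g' a = g a" if "a \<in> A" for a
      using nonexpansive_graph_single_valued[OF M g'M M_g[OF that]] .
  qed
qed

lemma bdd_above_dist_NE:
  assumes "f \<in> NE A" "g \<in> NE A"
  shows "bdd_above ((\<lambda>x. dist (f x) (g x)) ` A)"
proof -
  obtain c1 e1 where 1: "\<forall>x\<in>A. dist c1 (f x) \<le> e1"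
    using assms(1) unfolding NE_def bounded_def by auto
  obtain c2 e2 where 2: "\<forall>x\<in>A. dist c2 (g x) \<le> e2"
    using assms(2) unfolding NE_def bounded_def by auto
  have "dist (f x) (g x) \<le> e1 + dist c1 c2 + e2" if "x \<in> A" for x
    using 1 2 that dist_triangle[of "f x" "g x" c1] dist_triangle[of c1 "g x" c2]
      dist_commute[of "f x" c1] by fastforce
  then show ?thesis by (intro bdd_aboveI2)
qed

lemma bounded_range_near:
  assumes "bounded (range f)" "\<forall>x. dist (g x) (f x) \<le> d"
  shows "bounded (range g)"
proof -
  obtain c e where ce: "\<forall>x. dist c (f x) \<le> e"
    using assms(1) unfolding bounded_def by auto
  have "dist c (g x) \<le> e + d" for x
    using ce[rule_format, of x] assms(2)[rule_format, of x] dist_triangle[of c "g x" "f x"]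
      dist_commute[of "f x" "g x"] by linarith
  then show ?thesis unfolding bounded_def by blast
qed

lemma setdist_pt_Phi_le:
  fixes A :: "'a::metric_space set"
  assumes hc: "hyperconvex (UNIV :: 'b::metric_space set)" and "A \<noteq> {}"
    and f: "f \<in> (NE A :: ('a \<Rightarrow> 'b) set)" and g: "g \<in> NE A"
    and f': "f' \<in> Phi A f"
  shows "setdist_pt UNIV f' (Phi A g) \<le> ereal (dsup A f g)"
proof -
  define d where "d = dsup A f g"
  have le_d: "dist (f a) (g a) \<le> d" if "a \<in> A" for a
    unfolding d_def dsup_def using bdd_above_dist_NE[OF f g] that by (rule cSUP_upper2) simp
  with \<open>A \<noteq> {}\<close> have "d \<ge> 0" by (meson equals0I order.trans zero_le_dist)
  have f'_NE: "f' \<in> NE UNIV" and f'_A: "\<forall>a\<in>A. f' a = f a"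
    using f' unfolding Phi_def by (auto simp: fun_eq_iff split: if_splits)
  obtain g' where g'_ne: "\<forall>x y. dist (g' x) (g' y) \<le> dist x y" and g'_A: "\<forall>a\<in>A. g' a = g a"
    and g'_near: "\<forall>x. dist (g' x) (f' x) \<le> d"
    using hyperconvex_nonexpansive_extension_near[OF hc, of A g f' d] g f'_NE le_d f'_A \<open>d \<ge> 0\<close>
    unfolding NE_def by (auto simp: dist_commute)
  have "g' \<in> Phi A g"
    using g'_ne g'_A g bounded_range_near[OF _ g'_near] f'_NE
    unfolding Phi_def NE_def by (auto simp: fun_eq_iff)
  moreover have "dsup UNIV f' g' \<le> d"
    unfolding dsup_def by (rule cSUP_least) (use g'_near in \<open>auto simp: dist_commute\<close>)
  ultimately show ?thesis
    unfolding setdist_pt_def d_def[symmetric] by (meson INF_lower2 ereal_less_eq(3))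
qed

theorem lemma5p3:
  fixes A :: "'a::metric_space set"
  assumes "A \<noteq> {}"
    and "hyperconvex (UNIV :: 'b::metric_space set)"
    and "f \<in> (NE A :: ('a \<Rightarrow> 'b) set)" and "g \<in> NE A"
  shows "hausdorff_sup (UNIV::'a set) (Phi A f) (Phi A g) \<le> ereal (dsup A f g)"
proof -
  have "dsup A g f = dsup A f g" unfolding dsup_def by (simp add: dist_commute)
  then have "(SUP c\<in>Phi A g. setdist_pt UNIV c (Phi A f)) \<le> ereal (dsup A f g)"
    using setdist_pt_Phi_le[OF assms(2,1,4,3)] by (metis SUP_least)
  moreover have "(SUP b\<in>Phi A f. setdist_pt UNIV b (Phi A g)) \<le> ereal (dsup A f g)"
    using setdist_pt_Phi_le[OF assms(2,1,3,4)] by (rule SUP_least)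
  ultimately show ?thesis unfolding hausdorff_sup_def by simp
qed

end
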